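(* For $n\ge 1$ let $\tau$ be a recursive tree of size $n$ chosen uniformly at random, and let $X_n$ be the number of distinct shapes (Pólya trees) among the fringe subtrees of $\tau$, i.e. the size of the compacted tree of $\tau$. Then \[ \mathbb{E}(X_n) = \mathcal{O}\!\left(\frac{n}{\log n}\right) \quad \text{as } n\to\infty . \]
   Context: A recursive tree of size $n$ is a rooted non-plane (unordered) tree with $n$ nodes carrying the distinct labels $1,\dots,n$ such that labels increase along every path from the root to a leaf; there are $(n-1)!$ of them. A Pólya tree is an unlabeled rooted non-plane tree; the shape of a (labeled) tree is the Pólya tree obtained by forgetting its labels. A fringe subtree of a rooted tree is a node together with all of its descendants. The compacted tree keeps one copy of each distinct fringe-subtree shape, so its size is the number of distinct fringe-subtree shapes. *)

theory Defs
  imports Complex_Main "HOL-Library.Multiset" "HOL-Library.Landau_Symbols"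
begin

text \<open>Polya trees: unlabeled rooted non-plane trees (a node with a multiset of children).\<close>
datatype ptree = PNode "ptree multiset"

text \<open>A recursive tree of size n is encoded by its parent map: the node set is {1..n},
  the root is 1, and every node i in {2..n} has parent p i with 1 \<le> p i < i.
  Outside {2..n} the map is 0 (so the encoding is unique). This is a bijection with
  increasingly labelled rooted unordered trees on {1..n}; there are (n-1)! of them.\<close>
definition recursive_trees :: "nat \<Rightarrow> (nat \<Rightarrow> nat) set" where
  "recursive_trees n = {p. (\<forall>i\<in>{2..n}. 1 \<le> p i \<and> p i < i) \<and> (\<forall>i. i \<notin> {2..n} \<longrightarrow> p i = 0)}"

function fringe_shape :: "nat \<Rightarrow> (nat \<Rightarrow> nat) \<Rightarrow> nat \<Rightarrow> ptree" where
  "fringe_shape n p v =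
     PNode (mset (map (fringe_shape n p) (sorted_list_of_set {i. v < i \<and> i \<le> n \<and> p i = v})))"
  by auto
termination
  by (relation "measure (\<lambda>(n, p, v). n - v)") auto

definition compacted_size :: "nat \<Rightarrow> (nat \<Rightarrow> nat) \<Rightarrow> nat" where
  "compacted_size n p = card (fringe_shape n p ` {1..n})"

definition expected_compacted_size :: "nat \<Rightarrow> real" where
  "expected_compacted_size n =
     (\<Sum>p\<in>recursive_trees n. real (compacted_size n p)) / real (card (recursive_trees n))"

end

theory Submission
  imports Defs "HOL-Real_Asymp.Real_Asymp"
begin

(* A fringe subtree with at most k nodes is coded by a balanced word of length at most 2k,
   so at most 2^(2k+1) distinct shapes are small. Large subtrees rooted at one of the nodes
   1..m contribute at most m shapes. For a node v > m, growing the tree one node at a time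
   (node n+1 attaches to a uniform node of {1..n}, landing in the subtree of v with probability
   S_v/n) gives the second moment E[S_v(S_v+1)] = 2n(n+1)/(v(v+1)) of the subtree size S_v,
   so by Markov's inequality the expected number of such v with S_v > k is at most
   2n(n+1)/(k(k+1)(m+1)). Taking k ~ ln n/4 and m = n/k gives O(n/ln n). *)

section \<open>Polya trees of bounded size\<close>

function ptree_size :: "ptree \<Rightarrow> nat" where
  "ptree_size (PNode M) = Suc (\<Sum>\<^sub># (image_mset ptree_size M))"
  by (metis ptree.exhaust) simp
termination
  by (relation "measure size") (auto dest!: multi_member_split)

(* A stack machine reading a word as a Dyck path: True opens a new node, False closes the
   topmost node and adds it as a child of the node below. *)
fun run_word :: "bool list \<Rightarrow> ptree multiset list \<Rightarrow> ptree multiset list" where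
  "run_word [] S = S"
| "run_word (True # w) S = run_word w ({#} # S)"
| "run_word (False # w) (M # N # S) = run_word w (add_mset (PNode M) N # S)"
| "run_word (False # w) S = run_word w S"

definition decode_word :: "bool list \<Rightarrow> ptree" where
  "decode_word w = (SOME t. t \<in># hd (run_word w [{#}]))"

definition word_builds :: "bool list \<Rightarrow> ptree multiset \<Rightarrow> bool" where
  "word_builds w F \<longleftrightarrow> (\<forall>rest M S. run_word (w @ rest) (M # S) = run_word rest ((M + F) # S))"

lemma word_builds_append:
  "word_builds w F \<Longrightarrow> word_builds w' G \<Longrightarrow> word_builds (w @ w') (F + G)"
  by (simp add: word_builds_def add.assoc)

lemma word_builds_node: "word_builds w M \<Longrightarrow> word_builds (True # w @ [False]) {#PNode M#}"
  unfolding word_builds_def by simp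

lemma ex_word_builds_forest:
  assumes "\<forall>t\<in>#F. \<exists>w. length w = 2 * ptree_size t \<and> word_builds w {#t#}"
  shows "\<exists>w. length w = 2 * \<Sum>\<^sub># (image_mset ptree_size F) \<and> word_builds w F"
  using assms
proof (induction F)
  case empty
  show ?case by (intro exI[of _ "[]"]) (simp add: word_builds_def)
next
  case (add t F)
  obtain w where w: "length w = 2 * ptree_size t" "word_builds w {#t#}"
    using add.prems by auto
  obtain ws where ws: "length ws = 2 * \<Sum>\<^sub># (image_mset ptree_size F)" "word_builds ws F"
    using add by auto
  have "word_builds (w @ ws) (add_mset t F)"
    using word_builds_append[OF w(2) ws(2)] by simp
  with w ws show ?case
    by (intro exI[of _ "w @ ws"]) simp
qed

lemma ex_word_builds_ptree: "\<exists>w. length w = 2 * ptree_size t \<and> word_builds w {#t#}"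
proof (induction t)
  case (PNode M)
  then obtain w where "length w = 2 * \<Sum>\<^sub># (image_mset ptree_size M)" "word_builds w M"
    using ex_word_builds_forest by blast
  then show ?case
    by (intro exI[of _ "True # w @ [False]"]) (simp add: word_builds_node)
qed

lemma decode_word_builds:
  assumes "word_builds w {#t#}"
  shows "decode_word w = t"
proof -
  have "run_word (w @ []) [{#}] = run_word [] [{#} + {#t#}]"
    using assms unfolding word_builds_def by blast
  then show ?thesis
    by (simp add: decode_word_def)
qed

lemma ptrees_size_le_subset_decode:
  "{t. ptree_size t \<le> k} \<subseteq> decode_word ` {w. length w \<le> 2 * k}"
proof
  fix t assume "t \<in> {t. ptree_size t \<le> k}"
  moreover obtain w where "length w = 2 * ptree_size t" "decode_word w = t"
    using ex_word_builds_ptree decode_word_builds by blast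
  ultimately show "t \<in> decode_word ` {w. length w \<le> 2 * k}"
    by force
qed

lemma finite_bool_lists_length_le: "finite {w :: bool list. length w \<le> n}"
  using finite_lists_length_le[of "UNIV :: bool set" n] by simp

lemma finite_ptrees_size_le: "finite {t. ptree_size t \<le> k}"
  by (rule finite_subset[OF ptrees_size_le_subset_decode])
    (simp add: finite_bool_lists_length_le)

lemma card_ptrees_size_le: "card {t. ptree_size t \<le> k} \<le> 2 ^ (2 * k + 1)"
proof -
  let ?W = "{w :: bool list. length w \<le> 2 * k}"
  have "card {t. ptree_size t \<le> k} \<le> card (decode_word ` ?W)"
    by (intro card_mono finite_imageI ptrees_size_le_subset_decode finite_bool_lists_length_le)
  also have "\<dots> \<le> card ?W"
    by (intro card_image_le finite_bool_lists_length_le)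
  also have "\<dots> = (\<Sum>i=0..<2 * k + 1. 2 ^ i)"
    using card_lists_length_le[of "UNIV :: bool set" "2 * k"]
    by (simp add: atLeast0LessThan lessThan_Suc_atMost)
  also have "\<dots> \<le> 2 ^ (2 * k + 1)"
    by (simp add: sum_power2)
  finally show ?thesis .
qed

abbreviation children :: "nat \<Rightarrow> (nat \<Rightarrow> nat) \<Rightarrow> nat \<Rightarrow> nat set" where
  "children n p v \<equiv> {i. v < i \<and> i \<le> n \<and> p i = v}"

function descendants :: "nat \<Rightarrow> (nat \<Rightarrow> nat) \<Rightarrow> nat \<Rightarrow> nat set" where
  "descendants n p v = insert v (\<Union>c\<in>children n p v. descendants n p c)"
  by auto
termination
  by (relation "measure (\<lambda>(n, p, v). n - v)") auto

declare descendants.simps [simp del] fringe_shape.simps [simp del]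

definition subtree_size :: "nat \<Rightarrow> (nat \<Rightarrow> nat) \<Rightarrow> nat \<Rightarrow> nat" where
  "subtree_size n p v = card (descendants n p v)"

lemma finite_children: "finite (children n p v)"
  by (rule finite_subset[of _ "{..n}"]) auto

lemma mem_descendantsD: "i \<in> descendants n p v \<Longrightarrow> i = v \<or> v < i \<and> i \<le> n"
proof (induction n p v rule: descendants.induct)
  case (1 n p v)
  then show ?case by (subst (asm) descendants.simps) fastforce
qed

lemma finite_descendants: "finite (descendants n p v)"
  by (rule finite_subset[of _ "insert v {..n}"]) (auto dest: mem_descendantsD)

lemma descendants_child_subset:
  "c \<in> children n p v \<Longrightarrow> descendants n p c \<subseteq> descendants n p v"
  by (subst (2) descendants.simps) auto

lemma parent_mem_descendants:
  "i \<in> descendants n p c \<Longrightarrow> i \<noteq> c \<Longrightarrow> p i \<in> descendants n p c \<and> p i < i"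
proof (induction n p c rule: descendants.induct)
  case (1 n p v)
  then obtain c where c: "c \<in> children n p v" "i \<in> descendants n p c"
    by (subst (asm) descendants.simps) auto
  show ?case
  proof (cases "i = c")
    case True
    with c show ?thesis by (subst descendants.simps) auto
  next
    case False
    with "1.IH" c show ?thesis using descendants_child_subset[OF c(1)] by blast
  qed
qed

lemma descendants_children_disjoint:
  assumes c: "c \<in> children n p v" and c': "c' \<in> children n p v" and "c \<noteq> c'"
  shows "descendants n p c \<inter> descendants n p c' = {}"
proof -
  (* A common descendant i other than c and c' has the smaller common descendant p i. *)
  have "i \<notin> descendants n p c \<inter> descendants n p c'" for i
  proof (induction i rule: less_induct)
    case (less i)
    show ?case
    proof
      assume i: "i \<in> descendants n p c \<inter> descendants n p c'"
      consider "i = c" | "i = c'" | "i \<noteq> c" "i \<noteq> c'" by blast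
      then show False
      proof cases
        case 1
        then have "v \<in> descendants n p c'"
          using i c \<open>c \<noteq> c'\<close> parent_mem_descendants by fastforce
        then show False using c' by (auto dest: mem_descendantsD)
      next
        case 2
        then have "v \<in> descendants n p c"
          using i c' \<open>c \<noteq> c'\<close> parent_mem_descendants by fastforce
        then show False using c by (auto dest: mem_descendantsD)
      next
        case 3
        with i parent_mem_descendants less show False by blast
      qed
    qed
  qed
  then show ?thesis by blast
qed

lemma subtree_size_children:
  "subtree_size n p v = Suc (\<Sum>c\<in>children n p v. subtree_size n p c)"
proof -
  have "v \<notin> (\<Union>c\<in>children n p v. descendants n p c)"
    by (auto dest: mem_descendantsD)
  moreover have "card (\<Union>c\<in>children n p v. descendants n p c)
      = (\<Sum>c\<in>children n p v. card (descendants n p c))"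
    by (intro card_UN_disjoint finite_children finite_descendants ballI impI
        descendants_children_disjoint) auto
  ultimately show ?thesis
    unfolding subtree_size_def
    by (subst descendants.simps) (simp add: finite_children finite_descendants)
qed

lemma ptree_size_fringe_shape: "ptree_size (fringe_shape n p v) = subtree_size n p v"
proof (induction n p v rule: fringe_shape.induct)
  case (1 n p v)
  have "ptree_size (fringe_shape n p v) = Suc (\<Sum>c\<in>children n p v. ptree_size (fringe_shape n p c))"
    by (subst fringe_shape.simps)
      (simp add: sum_unfold_sum_mset image_mset.compositionality comp_def
        flip: sorted_list_of_mset_set)
  also have "\<dots> = subtree_size n p v"
    using "1.IH" by (simp add: subtree_size_children[of n p v] finite_children)
  finally show ?case .
qed

lemma descendants_fun_upd:
  assumes "v \<le> n"
  shows "descendants (Suc n) (p(Suc n := j)) v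
       = descendants n p v \<union> (if j \<in> descendants n p v then {Suc n} else {})"
  using assms
proof (induction n p v rule: descendants.induct)
  case (1 n p v)
  let ?q = "p(Suc n := j)"
  have new_leaf: "descendants (Suc n) ?q (Suc n) = {Suc n}"
    by (subst descendants.simps) auto
  have "children (Suc n) ?q v = children n p v \<union> (if j = v then {Suc n} else {})"
    using "1.prems" by (auto simp: le_Suc_eq)
  moreover have "descendants (Suc n) ?q c
      = descendants n p c \<union> (if j \<in> descendants n p c then {Suc n} else {})"
    if "c \<in> children n p v" for c
    using that by (intro "1.IH") auto
  ultimately have "descendants (Suc n) ?q v = insert v ((\<Union>c\<in>children n p v.
      descendants n p c \<union> (if j \<in> descendants n p c then {Suc n} else {}))
      \<union> (if j = v then {Suc n} else {}))"
    using new_leaf by (subst descendants.simps) auto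
  also have "\<dots> = descendants n p v \<union> (if j \<in> descendants n p v then {Suc n} else {})"
    by (subst (1 2) descendants.simps) (auto split: if_splits)
  finally show ?case .
qed

lemma subtree_size_fun_upd:
  assumes "v \<le> n"
  shows "subtree_size (Suc n) (p(Suc n := j)) v
       = subtree_size n p v + (if j \<in> descendants n p v then 1 else 0)"
proof -
  have "Suc n \<notin> descendants n p v"
    using assms by (auto dest: mem_descendantsD)
  then show ?thesis
    unfolding subtree_size_def descendants_fun_upd[OF assms] by (simp add: finite_descendants)
qed

lemma descendants_subset: "1 \<le> v \<Longrightarrow> v \<le> n \<Longrightarrow> descendants n p v \<subseteq> {1..n}"
  by (auto dest: mem_descendantsD)

lemma recursive_trees_le_one: "n \<le> 1 \<Longrightarrow> recursive_trees n = {\<lambda>_. 0}"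
  unfolding recursive_trees_def by auto

lemma recursive_trees_Suc:
  assumes "1 \<le> n"
  shows "recursive_trees (Suc n) = (\<lambda>(p, j). p(Suc n := j)) ` (recursive_trees n \<times> {1..n})"
proof
  show "(\<lambda>(p, j). p(Suc n := j)) ` (recursive_trees n \<times> {1..n}) \<subseteq> recursive_trees (Suc n)"
    using assms unfolding recursive_trees_def by (auto simp: le_Suc_eq)
next
  show "recursive_trees (Suc n) \<subseteq> (\<lambda>(p, j). p(Suc n := j)) ` (recursive_trees n \<times> {1..n})"
  proof
    fix q assume q: "q \<in> recursive_trees (Suc n)"
    have "q (Suc n) \<in> {1..n}"
      using q assms unfolding recursive_trees_def by fastforce
    moreover have "q(Suc n := 0) \<in> recursive_trees n"
      using q unfolding recursive_trees_def by (auto simp: le_Suc_eq)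
    ultimately show "q \<in> (\<lambda>(p, j). p(Suc n := j)) ` (recursive_trees n \<times> {1..n})"
      by (intro image_eqI[of _ _ "(q(Suc n := 0), q (Suc n))"]) auto
  qed
qed

lemma inj_on_attach_node:
  "inj_on (\<lambda>(p, j). p(Suc n := j)) (recursive_trees n \<times> {1..n})"
proof (rule inj_onI, clarsimp)
  fix p j p' j'
  assume "p \<in> recursive_trees n" "p' \<in> recursive_trees n" and eq: "p(Suc n := j) = p'(Suc n := j')"
  then have "p (Suc n) = p' (Suc n)"
    unfolding recursive_trees_def by auto
  then have "p x = p' x" for x
    using fun_cong[OF eq, of x] by (cases "x = Suc n") auto
  moreover have "j = j'"
    using fun_cong[OF eq, of "Suc n"] by simp
  ultimately show "p = p' \<and> j = j'"
    by auto
qed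

lemma finite_recursive_trees: "finite (recursive_trees n)"
proof (induction n)
  case (Suc n)
  then show ?case
    by (cases "n = 0") (simp_all add: recursive_trees_le_one recursive_trees_Suc)
qed (simp add: recursive_trees_le_one)

lemma card_recursive_trees: "card (recursive_trees n) = fact (n - 1)"
proof (induction n)
  case (Suc n)
  show ?case
  proof (cases "n = 0")
    case False
    then have "card (recursive_trees (Suc n)) = card (recursive_trees n) * n"
      using inj_on_attach_node[of n] finite_recursive_trees[of n]
      by (simp add: recursive_trees_Suc card_image card_cartesian_product)
    with Suc False show ?thesis
      by (simp add: fact_reduce[of n])
  qed (simp add: recursive_trees_le_one)
qed (simp add: recursive_trees_le_one)

lemma sum_recursive_trees_Suc:
  assumes "1 \<le> n"
  shows "(\<Sum>q\<in>recursive_trees (Suc n). f q) = (\<Sum>p\<in>recursive_trees n. \<Sum>j\<in>{1..n}. f (p(Suc n := j)))"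
  unfolding recursive_trees_Suc[OF assms] sum.reindex[OF inj_on_attach_node]
  by (simp add: sum.cartesian_product comp_def split_def)

section \<open>The second moment of a subtree size\<close>

lemma sum_attach_subtree_moment:
  assumes "1 \<le> v" "v \<le> n"
  shows "(\<Sum>j\<in>{1..n}. real (subtree_size (Suc n) (p(Suc n := j)) v)
            * (real (subtree_size (Suc n) (p(Suc n := j)) v) + 1))
       = (real n + 2) * (real (subtree_size n p v) * (real (subtree_size n p v) + 1))"
proof -
  define s where "s = subtree_size n p v"
  let ?A = "descendants n p v" and ?g = "\<lambda>x :: nat. real x * (real x + 1)"
  have A: "?A \<subseteq> {1..n}" "card ?A = s"
    using descendants_subset[OF assms(1,2)] by (simp_all add: s_def subtree_size_def)
  then have s: "s \<le> n" "card ({1..n} - ?A) = n - s"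
    using card_mono[OF _ A(1)] by (simp_all add: card_Diff_subset finite_descendants)
  have "(\<Sum>j\<in>{1..n}. ?g (subtree_size (Suc n) (p(Suc n := j)) v))
      = (\<Sum>j\<in>{1..n}. if j \<in> ?A then ?g (s + 1) else ?g s)"
    by (intro sum.cong) (simp_all add: subtree_size_fun_upd[OF assms(2)] s_def)
  also have "\<dots> = card ?A * ?g (s + 1) + card ({1..n} - ?A) * ?g s"
    using A(1) by (simp add: sum.If_cases Int_absorb1 flip: Diff_eq)
  also have "\<dots> = (n + 2) * ?g s"
    using A s by (simp add: of_nat_diff algebra_simps)
  finally show ?thesis
    by (simp add: s_def)
qed

lemma sum_subtree_moment:
  assumes "1 \<le> v" "v \<le> n"
  shows "(\<Sum>p\<in>recursive_trees n. real (subtree_size n p v) * (real (subtree_size n p v) + 1))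
       = fact (n - 1) * (2 * real n * (real n + 1) / (real v * (real v + 1)))"
  using assms(2)
proof (induction n rule: dec_induct)
  case base
  have "descendants v p v = {v}" for p
    by (subst descendants.simps) auto
  then have "subtree_size v p v = 1" for p
    by (simp add: subtree_size_def)
  moreover have "2 * real v * (real v + 1) / (real v * (real v + 1)) = 2"
    using assms(1) by simp
  ultimately show ?case
    by (simp add: card_recursive_trees)
next
  case (step n)
  then have "1 \<le> n"
    using assms(1) by simp
  have "(\<Sum>p\<in>recursive_trees (Suc n).
        real (subtree_size (Suc n) p v) * (real (subtree_size (Suc n) p v) + 1))
      = (\<Sum>p\<in>recursive_trees n. (real n + 2) * (real (subtree_size n p v) * (real (subtree_size n p v) + 1)))"
    unfolding sum_recursive_trees_Suc[OF \<open>1 \<le> n\<close>]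
    by (rule sum.cong[OF refl], rule sum_attach_subtree_moment[OF assms(1) step.hyps(1)])
  also have "\<dots> = (real n + 2) * (fact (n - 1) * (2 * real n * (real n + 1) / (real v * (real v + 1))))"
    by (simp add: step.IH flip: sum_distrib_left)
  also have "\<dots> = real n * fact (n - 1) * (2 * real (Suc n) * (real (Suc n) + 1) / (real v * (real v + 1)))"
    by (simp add: algebra_simps)
  also have "real n * fact (n - 1) = (fact (Suc n - 1) :: real)"
    using \<open>1 \<le> n\<close> by (cases n) simp_all
  finally show ?case .
qed

section \<open>Counting the distinct shapes\<close>

lemma compacted_size_le:
  "compacted_size n p \<le> 2 ^ (2 * k + 1) + card {v \<in> {1..n}. k < subtree_size n p v}"
proof -
  let ?large = "{v \<in> {1..n}. k < subtree_size n p v}"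
  have "fringe_shape n p ` {1..n} \<subseteq> {t. ptree_size t \<le> k} \<union> fringe_shape n p ` ?large"
    by (auto simp: ptree_size_fringe_shape)
  then have "compacted_size n p \<le> card ({t. ptree_size t \<le> k} \<union> fringe_shape n p ` ?large)"
    unfolding compacted_size_def by (intro card_mono) (simp_all add: finite_ptrees_size_le)
  also have "\<dots> \<le> card {t. ptree_size t \<le> k} + card (fringe_shape n p ` ?large)"
    by (rule card_Un_le)
  also have "\<dots> \<le> 2 ^ (2 * k + 1) + card ?large"
    by (intro add_mono card_ptrees_size_le card_image_le) simp
  finally show ?thesis .
qed

lemma card_exceeding_le_moment:
  fixes f :: "nat \<Rightarrow> nat"
  assumes "0 < k"
  shows "real (card {v \<in> {1..n}. k < f v})
       \<le> m + (\<Sum>v\<in>{m+1..n}. real (f v) * (real (f v) + 1)) / (real k * (real k + 1))"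
proof -
  let ?tail = "{v \<in> {m+1..n}. k < f v}" and ?K = "real k * (real k + 1)"
  have "card {v \<in> {1..n}. k < f v} \<le> card ({1..m} \<union> ?tail)"
    by (intro card_mono) auto
  also have "\<dots> \<le> m + card ?tail"
    using card_Un_le[of "{1..m}" ?tail] by simp
  finally have "real (card {v \<in> {1..n}. k < f v}) \<le> m + (\<Sum>v\<in>?tail. 1 :: real)"
    by simp
  also have "(\<Sum>v\<in>?tail. 1) \<le> (\<Sum>v\<in>?tail. real (f v) * (real (f v) + 1) / ?K)"
  proof (intro sum_mono)
    fix v assume "v \<in> ?tail"
    then have "?K \<le> real (f v) * (real (f v) + 1)"
      by (intro mult_mono) auto
    moreover have "0 < ?K"
      using assms by simp
    ultimately show "1 \<le> real (f v) * (real (f v) + 1) / ?K"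
      by (simp add: le_divide_eq_1_pos)
  qed
  also have "\<dots> \<le> (\<Sum>v\<in>{m+1..n}. real (f v) * (real (f v) + 1) / ?K)"
    by (intro sum_mono2) auto
  finally show ?thesis
    by (simp add: sum_divide_distrib)
qed

lemma compacted_size_le_moments:
  assumes "0 < k"
  shows "real (compacted_size n p) \<le> 2 ^ (2 * k + 1) + real m
    + (\<Sum>v\<in>{m+1..n}. real (subtree_size n p v) * (real (subtree_size n p v) + 1))
      / (real k * (real k + 1))"
proof -
  have "real (compacted_size n p)
      \<le> real (2 ^ (2 * k + 1) + card {v \<in> {1..n}. k < subtree_size n p v})"
    using compacted_size_le[of n p k] by (simp only: of_nat_le_iff)
  then show ?thesis
    using card_exceeding_le_moment[OF assms, where f = "subtree_size n p" and n = n and m = m]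
    by simp
qed

lemma sum_inverse_consecutive_products:
  "m \<le> n \<Longrightarrow> (\<Sum>v\<in>{m+1..n}. 1 / (real v * (v + 1))) = 1 / (m + 1) - 1 / (n + 1)"
proof (induction n rule: dec_induct)
  case (step n)
  have "{m+1..Suc n} = insert (Suc n) {m+1..n}"
    using step by auto
  moreover have "1 / (real (Suc n) * (Suc n + 1)) = 1 / (n + 1) - 1 / (Suc n + 1)"
    by (simp add: field_simps)
  ultimately show ?case
    using step.IH by simp
qed simp

lemma sum_tail_subtree_moments:
  assumes "m \<le> n"
  shows "(\<Sum>p\<in>recursive_trees n. \<Sum>v\<in>{m+1..n}.
            real (subtree_size n p v) * (real (subtree_size n p v) + 1))
       \<le> fact (n - 1) * (2 * real n * (real n + 1)) / (real m + 1)"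
proof -
  let ?c = "fact (n - 1) * (2 * real n * (real n + 1))"
  have "(\<Sum>p\<in>recursive_trees n. \<Sum>v\<in>{m+1..n}.
            real (subtree_size n p v) * (real (subtree_size n p v) + 1))
      = (\<Sum>v\<in>{m+1..n}. \<Sum>p\<in>recursive_trees n.
            real (subtree_size n p v) * (real (subtree_size n p v) + 1))"
    by (rule sum.swap)
  also have "\<dots> = (\<Sum>v\<in>{m+1..n}. ?c * (1 / (real v * (real v + 1))))"
    by (intro sum.cong refl) (simp add: sum_subtree_moment)
  also have "\<dots> = ?c * (1 / (real m + 1) - 1 / (real n + 1))"
    by (simp only: sum_inverse_consecutive_products[OF assms] flip: sum_distrib_left)
  also have "\<dots> \<le> ?c * (1 / (real m + 1))"
    by (intro mult_left_mono) simp_all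
  finally show ?thesis
    by simp
qed

lemma expected_compacted_size_le:
  assumes "0 < k" "m \<le> n"
  shows "expected_compacted_size n
       \<le> 2 ^ (2 * k + 1) + real m + 2 * real n * (real n + 1) / (real k * (real k + 1) * (real m + 1))"
proof -
  let ?R = "recursive_trees n" and ?K = "real k * (real k + 1)"
  define c :: real where "c = fact (n - 1)"
  have c: "real (card ?R) = c" "0 < c"
    by (simp_all add: c_def card_recursive_trees)
  have "(\<Sum>p\<in>?R. real (compacted_size n p))
      \<le> (\<Sum>p\<in>?R. 2 ^ (2 * k + 1) + real m
          + (\<Sum>v\<in>{m+1..n}. real (subtree_size n p v) * (real (subtree_size n p v) + 1)) / ?K)"
    by (intro sum_mono compacted_size_le_moments assms(1))
  also have "\<dots> = c * (2 ^ (2 * k + 1) + real m)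
      + (\<Sum>p\<in>?R. \<Sum>v\<in>{m+1..n}. real (subtree_size n p v) * (real (subtree_size n p v) + 1)) / ?K"
    using c by (simp add: sum.distrib sum_divide_distrib)
  also have "\<dots> \<le> c * (2 ^ (2 * k + 1) + real m) + c * (2 * real n * (real n + 1)) / (real m + 1) / ?K"
    using sum_tail_subtree_moments[OF assms(2)] assms(1)
    by (intro add_left_mono divide_right_mono) (simp_all add: c_def)
  also have "\<dots> = c * (2 ^ (2 * k + 1) + real m + 2 * real n * (real n + 1) / (?K * (real m + 1)))"
    by (simp add: field_simps)
  finally show ?thesis
    using c by (simp add: expected_compacted_size_def pos_divide_le_eq mult.commute)
qed

lemma expected_compacted_size_le_threshold:
  assumes "0 < k"
  shows "expected_compacted_size n \<le> 2 * 4 ^ k + 5 * (real n / real k)"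
proof -
  define m where "m = n div k"
  have "n = k * m + n mod k" "n mod k < k"
    using assms by (simp_all add: m_def)
  then have "n \<le> k * m + k"
    by linarith
  then have m: "real m \<le> real n / real k" "real n \<le> real k * (real m + 1)"
    by (simp_all add: m_def of_nat_div_le_of_nat distrib_left flip: of_nat_mult of_nat_add)
  have "2 * real n * (real n + 1) / (real k * (real k + 1) * (real m + 1)) \<le> 4 * (real n / real k)"
  proof (cases "n = 0")
    case False
    have "real n * (real k + 1) \<le> real k * (real k + 1) * (real m + 1)"
      using mult_right_mono[OF m(2), of "real k + 1"] by (simp add: mult_ac)
    then have "2 * real n * (real n + 1) / (real k * (real k + 1) * (real m + 1))
        \<le> 2 * real n * (real n + 1) / (real n * (real k + 1))"
      using False assms by (intro divide_left_mono mult_pos_pos) auto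
    also have "\<dots> = 2 * (real n + 1) / (real k + 1)"
      using False by simp
    also have "\<dots> \<le> 4 * real n / (real k + 1)"
      using False by (intro divide_right_mono) auto
    also have "\<dots> \<le> 4 * (real n / real k)"
      using assms by (simp add: frac_le)
    finally show ?thesis .
  qed simp
  moreover have "(2 :: real) ^ (2 * k + 1) = 2 * 4 ^ k"
    by (simp add: power_mult)
  ultimately show ?thesis
    using expected_compacted_size_le[OF assms, of m n] m(1) by (simp add: m_def)
qed

lemma expected_compacted_size_le_log:
  assumes "exp 8 \<le> real n"
  shows "expected_compacted_size n \<le> 2 * sqrt (real n) + 40 * (real n / ln (real n))"
proof -
  define L where "L = ln (real n)"
  have n: "0 < real n"
    using assms exp_gt_zero[of 8] by linarith
  have L: "8 \<le> L"
    using assms n by (simp add: L_def ln_ge_iff)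
  define k where "k = nat \<lfloor>L / 4\<rfloor>"
  have "real k = of_int \<lfloor>L / 4\<rfloor>"
    using L by (simp add: k_def)
  then have k: "real k \<le> L / 4" "L / 8 \<le> real k"
    using L by linarith+
  have "2 \<le> exp (1 :: real)"
    using exp_ge_add_one_self[of 1] by simp
  then have "(4::real) ^ k \<le> (exp 1 ^ 2) ^ k"
    using power_mono[of 2 "exp (1 :: real)" 2] by (intro power_mono) simp_all
  also have "\<dots> = exp (real (2 * k))"
    by (simp add: power_mult[symmetric] exp_of_nat_mult[symmetric])
  also have "\<dots> \<le> exp (L / 2)"
    using k by simp
  also have "\<dots> = sqrt (real n)"
    using n by (simp add: L_def ln_sqrt[symmetric])
  finally have "(4::real) ^ k \<le> sqrt (real n)" .
  moreover have "real n / real k \<le> 8 * (real n / L)"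
    using k L n by (simp add: field_simps)
  moreover have "0 < k"
    using k L by simp
  ultimately show ?thesis
    using expected_compacted_size_le_threshold[of k n] by (simp add: L_def)
qed

theorem theorem2p8:
  shows "expected_compacted_size \<in> O(\<lambda>n. real n / ln (real n))"
proof -
  have "eventually (\<lambda>n. exp 8 \<le> real n) at_top"
    by real_asymp
  then have "eventually (\<lambda>n. norm (expected_compacted_size n)
      \<le> norm (2 * sqrt (real n) + 40 * (real n / ln (real n)))) at_top"
  proof eventually_elim
    case (elim n)
    have "0 \<le> expected_compacted_size n"
      by (simp add: expected_compacted_size_def sum_nonneg)
    then show ?case
      using expected_compacted_size_le_log[OF elim]
        abs_ge_self[of "2 * sqrt (real n) + 40 * (real n / ln (real n))"] by simp
  qed
  then have "expected_compacted_size \<in> O(\<lambda>n. 2 * sqrt (real n) + 40 * (real n / ln (real n)))"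
    by (rule landau_o.big_mono)
  also have "(\<lambda>n. 2 * sqrt (real n) + 40 * (real n / ln (real n))) \<in> O(\<lambda>n. real n / ln (real n))"
    by real_asymp
  finally show ?thesis .
qed

end
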